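(* For every mechanism $x_i$ for agent $i$ satisfying (P) and (IC), with indirect utility $U_i(s_i)=\mathbb E[\omega x_i(s_i,s_{-i})\mid s_i]$ on $[\underline s,\overline s]$, $$\mathbb E[x_i(s)]=-\int_{\underline s}^{\overline s}\Big\{3(1-2s_i)f(s_i)+2s_i(1-s_i)f'(s_i)\Big\}U_i(s_i)\,ds_i+2\overline s(1-\overline s)f(\overline s)U_i(\overline s)-2\underline s(1-\underline s)f(\underline s)U_i(\underline s).$$
   Context: Setup. A state $\omega\in\{-1,+1\}$ is drawn with probability $1/2$ each. There are $n\ge2$ agents. Conditional on $\omega$, signals $s_1,\dots,s_n$ are i.i.d. with distribution $\mathbb F_\omega$ on $[0,1]$, normalized so that $s_i=\mathbb P[\omega=+1\mid s_i]$; $\mathbb F_{-1},\mathbb F_{+1}$ mutually absolutely continuous with densities; $\mathbb F=(\mathbb F_{-1}+\mathbb F_{+1})/2$ has density $f$ supported on the interval $[\underline s,\overline s]\subset[0,1]$, $\underline s<\overline s$, $f$ differentiable there with continuous derivative $f'$ and $|f'/f|$ bounded. The expectation $\mathbb E[x_i(s)]$ is with respect to the (unconditional) joint distribution of $s$. A mechanism for agent $i$ is measurable $x_i:[\underline s,\overline s]^n\to[0,1]$ (probability of receiving a good worth $\omega$, else $0$). (P): $\mathbb E[\omega x_i(s_i,s_{-i})\mid s_i]\ge0$; (IC): $\mathbb E[\omega x_i(s_i,s_{-i})\mid s_i]\ge\mathbb E[\omega x_i(\hat s_i,s_{-i})\mid s_i]$, for all $s_i,\hat s_i\in[\underline s,\overline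 s]$. *)

theory Defs
  imports "HOL-Analysis.Analysis"
begin

text \<open>Agents are indexed by 0..<n; a signal profile is an extensional
  function s :: nat => real on {..<n}.  fp and fm are the densities of the conditional
  signal distributions F_{+1} and F_{-1} (w.r.t. Lebesgue measure on the real line).\<close>

text \<open>Posterior P[omega = +1 | s_i = t] (prior 1/2 on each state).\<close>
definition posterior :: "(real \<Rightarrow> real) \<Rightarrow> (real \<Rightarrow> real) \<Rightarrow> real \<Rightarrow> real" where
  "posterior fp fm t = fp t / (fp t + fm t)"

text \<open>E[ x(r, s_{-i}) | omega ] where, conditional on omega, the other agents' signals
  s_j (j /= i) are i.i.d. with density g (g = fp for omega = +1, g = fm for omega = -1).\<close>
definition cond_alloc ::
  "(real \<Rightarrow> real) \<Rightarrow> nat \<Rightarrow> ((nat \<Rightarrow> real) \<Rightarrow> real) \<Rightarrow> nat \<Rightarrow> real \<Rightarrow> real" where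
  "cond_alloc g n x i r =
     (\<integral> s. x (s(i := r)) * (\<Prod>j\<in>{..<n} - {i}. g (s j))
        \<partial>(PiM ({..<n} - {i}) (\<lambda>_. lborel)))"

text \<open>E[ omega * x_i(r, s_{-i}) | s_i = t ]: interim utility of agent i with true signal t
  who reports r.\<close>
definition report_util ::
  "(real \<Rightarrow> real) \<Rightarrow> (real \<Rightarrow> real) \<Rightarrow> nat \<Rightarrow> ((nat \<Rightarrow> real) \<Rightarrow> real) \<Rightarrow> nat \<Rightarrow> real \<Rightarrow> real \<Rightarrow> real" where
  "report_util fp fm n x i t r =
     posterior fp fm t * cond_alloc fp n x i r - (1 - posterior fp fm t) * cond_alloc fm n x i r"

definition interim_util ::
  "(real \<Rightarrow> real) \<Rightarrow> (real \<Rightarrow> real) \<Rightarrow> nat \<Rightarrow> ((nat \<Rightarrow> real) \<Rightarrow> real) \<Rightarrow> nat \<Rightarrow> real \<Rightarrow> real" where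
  "interim_util fp fm n x i t = report_util fp fm n x i t t"

text \<open>E[x(s)] under the unconditional joint distribution of the signal profile:
  omega = +-1 with probability 1/2, signals i.i.d. given omega.\<close>
definition ex_ante_alloc ::
  "(real \<Rightarrow> real) \<Rightarrow> (real \<Rightarrow> real) \<Rightarrow> nat \<Rightarrow> ((nat \<Rightarrow> real) \<Rightarrow> real) \<Rightarrow> real" where
  "ex_ante_alloc fp fm n x =
     (\<integral> s. x s * ((1/2) * (\<Prod>j<n. fp (s j)) + (1/2) * (\<Prod>j<n. fm (s j)))
        \<partial>(PiM {..<n} (\<lambda>_. lborel)))"

definition mechanism :: "real \<Rightarrow> real \<Rightarrow> nat \<Rightarrow> ((nat \<Rightarrow> real) \<Rightarrow> real) \<Rightarrow> bool" where
  "mechanism a b n x \<longleftrightarrow>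
     x \<in> borel_measurable (PiM {..<n} (\<lambda>_. lborel)) \<and>
     (\<forall>s \<in> PiE {..<n} (\<lambda>_. {a..b}). 0 \<le> x s \<and> x s \<le> 1)"

end

theory Submission
  imports Defs
begin

(* Write Q_w r = E[x_i(r, s_-i) | omega = w] and Q = Q_+ + Q_-.  Under the normalisation
   s_i = P[omega = +1 | s_i], reporting r with signal t yields U r + (t - r) Q r, so (IC) says that
   U is convex with monotone subgradient Q.  The normalisation also forces f_+ = 2 s f and
   f_- = 2 (1 - s) f, so by Fubini E[x_i] is the integral of f (t Q_+ + (1 - t) Q_-), which equals
   f (2t - 1) U + g Q with g = 2t(1 - t) f; integrating g Q = g U' by parts gives the formula.
   For the merely convex U this integration by parts is proved by hand: g U minus the integral of
   g' U + g Q has increments O((t - r)^2) on [r, t] and is therefore constant. *)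

lemma eq_if_increments_bounded:
  fixes F M :: "real \<Rightarrow> real"
  assumes ab: "a \<le> b"
    and incr: "\<And>r t. a \<le> r \<Longrightarrow> r \<le> t \<Longrightarrow> t \<le> b \<Longrightarrow>
                 \<bar>F t - F r\<bar> \<le> (t - r) * (M t - M r) + C * (t - r)\<^sup>2"
  shows "F b = F a"
proof -
  define K where "K = (b - a) * (M b - M a + C * (b - a))"
  have bound: "\<bar>F b - F a\<bar> \<le> K / real N" if N: "N > 0" for N :: nat
  proof -
    define h where "h = (b - a) / real N"
    define p where "p k = a + real k * h" for k
    have h: "0 \<le> h" using ab N by (simp add: h_def)
    have p0: "p 0 = a" and pN: "p N = b" using N by (simp_all add: p_def h_def)
    have p_in: "a \<le> p k \<and> p k \<le> b" if "k \<le> N" for k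
    proof -
      have "real k * h \<le> real N * h" using that h by (intro mult_right_mono) auto
      also have "real N * h = b - a" using N by (simp add: h_def)
      finally show ?thesis using h by (simp add: p_def)
    qed
    have p_step: "p (Suc k) - p k = h" for k by (simp add: p_def algebra_simps)
    have "\<bar>F b - F a\<bar> = \<bar>\<Sum>k<N. F (p (Suc k)) - F (p k)\<bar>"
      using sum_lessThan_telescope[of "\<lambda>k. F (p k)" N] by (simp add: p0 pN)
    also have "\<dots> \<le> (\<Sum>k<N. \<bar>F (p (Suc k)) - F (p k)\<bar>)"
      by (rule sum_abs)
    also have "\<dots> \<le> (\<Sum>k<N. h * (M (p (Suc k)) - M (p k)) + C * h\<^sup>2)"
    proof (rule sum_mono)
      fix k assume "k \<in> {..<N}"
      then have "a \<le> p k" "p k \<le> p (Suc k)" "p (Suc k) \<le> b"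
        using p_in[of k] p_in[of "Suc k"] p_step[of k] h by auto
      then show "\<bar>F (p (Suc k)) - F (p k)\<bar> \<le> h * (M (p (Suc k)) - M (p k)) + C * h\<^sup>2"
        using incr p_step[of k] by metis
    qed
    also have "\<dots> = h * (M b - M a) + real N * C * h\<^sup>2"
      using sum_lessThan_telescope[of "\<lambda>k. M (p k)" N]
      by (simp add: sum.distrib p0 pN flip: sum_distrib_left sum_subtractf)
    also have "\<dots> = K / real N"
      using N by (simp add: K_def h_def power2_eq_square field_simps)
    finally show ?thesis .
  qed
  show ?thesis
  proof (rule ccontr)
    assume "F b \<noteq> F a"
    then have pos: "0 < \<bar>F b - F a\<bar>" by simp
    obtain N :: nat where N: "K / \<bar>F b - F a\<bar> < real N" using reals_Archimedean2 by blast
    have "0 \<le> K" using bound[of 1] pos by simp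
    then have "N > 0" using N pos by (metis divide_nonneg_nonneg gr0I abs_ge_zero not_less of_nat_0)
    then have "\<bar>F b - F a\<bar> * real N \<le> K" using bound by (simp add: field_simps)
    moreover have "K < \<bar>F b - F a\<bar> * real N" using N pos by (simp add: field_simps)
    ultimately show False by simp
  qed
qed

lemma
  fixes U Q :: "real \<Rightarrow> real"
  assumes sub: "\<And>r t. r \<in> {a..b} \<Longrightarrow> t \<in> {a..b} \<Longrightarrow> (t - r) * Q r \<le> U t - U r"
  shows subgradient_increment_bounds: "\<And>r t. r \<in> {a..b} \<Longrightarrow> t \<in> {a..b} \<Longrightarrow> r \<le> t \<Longrightarrow>
             (t - r) * Q r \<le> U t - U r \<and> U t - U r \<le> (t - r) * Q t"
    and subgradient_mono_on: "mono_on {a..b} Q"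
    and subgradient_abs_le: "\<And>s. s \<in> {a..b} \<Longrightarrow> \<bar>Q s\<bar> \<le> max \<bar>Q a\<bar> \<bar>Q b\<bar>"
    and subgradient_lipschitz_on: "(max \<bar>Q a\<bar> \<bar>Q b\<bar>)-lipschitz_on {a..b} U"
proof -
  show incr: "(t - r) * Q r \<le> U t - U r \<and> U t - U r \<le> (t - r) * Q t"
    if "r \<in> {a..b}" "t \<in> {a..b}" "r \<le> t" for r t
    using sub[OF that(1,2)] sub[OF that(2,1)] by (auto simp: algebra_simps)
  show mono: "mono_on {a..b} Q"
  proof (rule mono_onI)
    fix r t assume rt: "r \<in> {a..b}" "t \<in> {a..b}" "r \<le> t"
    show "Q r \<le> Q t"
    proof (cases "r = t")
      case False
      then have "0 < t - r" using rt by simp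
      moreover have "(t - r) * Q r \<le> (t - r) * Q t" using incr[OF rt] by linarith
      ultimately show ?thesis by simp
    qed simp
  qed
  show bound: "\<bar>Q s\<bar> \<le> max \<bar>Q a\<bar> \<bar>Q b\<bar>" if "s \<in> {a..b}" for s
    using mono_onD[OF mono, of a s] mono_onD[OF mono, of s b] that by auto
  show "(max \<bar>Q a\<bar> \<bar>Q b\<bar>)-lipschitz_on {a..b} U"
  proof (rule lipschitz_on_leI)
    fix r t assume rt: "r \<in> {a..b}" "t \<in> {a..b}" "r \<le> t"
    have "\<bar>(t - r) * Q s\<bar> \<le> (t - r) * max \<bar>Q a\<bar> \<bar>Q b\<bar>" if "s \<in> {a..b}" for s
      using bound[OF that] rt by (simp add: abs_mult mult_left_mono)
    with incr[OF rt] rt have "\<bar>U t - U r\<bar> \<le> (t - r) * max \<bar>Q a\<bar> \<bar>Q b\<bar>"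
      unfolding abs_le_iff by (smt (verit))
    then show "dist (U r) (U t) \<le> max \<bar>Q a\<bar> \<bar>Q b\<bar> * dist r t"
      using rt by (simp add: dist_real_def abs_minus_commute mult.commute)
  qed simp
qed

lemma abs_integral_le_real:
  fixes f :: "real \<Rightarrow> real"
  assumes "f integrable_on {r..t}" "r \<le> t" "\<And>s. s \<in> {r..t} \<Longrightarrow> \<bar>f s\<bar> \<le> B"
  shows "\<bar>integral {r..t} f\<bar> \<le> B * (t - r)"
proof -
  have "0 \<le> B" using assms(2) assms(3)[of r] by force
  then have "norm (integral {r..t} f) \<le> B * measure lborel {r..t}"
    using assms by (intro has_integral_bound_real[OF _ finite.emptyI] integrable_integral) auto
  then show ?thesis using assms(2) by simp
qed

lemma has_integral_subgradient:
  fixes U Q :: "real \<Rightarrow> real"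
  assumes ab: "a \<le> b"
    and sub: "\<And>r t. r \<in> {a..b} \<Longrightarrow> t \<in> {a..b} \<Longrightarrow> (t - r) * Q r \<le> U t - U r"
  shows "(Q has_integral (U b - U a)) {a..b}"
proof -
  note mono = subgradient_mono_on[OF sub]
  have Q_int: "Q integrable_on {a..b}" by (rule integrable_on_mono_on[OF mono])
  define F where "F s = U s - integral {a..s} Q" for s
  have "F b = F a"
  proof (rule eq_if_increments_bounded[where F=F and M=Q and C=0, OF ab])
    fix r t assume rt: "a \<le> r" "r \<le> t" "t \<le> b"
    have Q_int': "Q integrable_on {r..t}" by (rule integrable_subinterval_real[OF Q_int]) (use rt in auto)
    have "integral {a..t} Q = integral {a..r} Q + integral {r..t} Q"
      using Henstock_Kurzweil_Integration.integral_combine[where a=a and c=r and b=t and f=Q]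
        integrable_subinterval_real[OF Q_int, of a t] rt by simp
    then have "F t - F r = (U t - U r) - integral {r..t} Q" by (simp add: F_def)
    moreover have "(t - r) * Q r \<le> integral {r..t} Q \<and> integral {r..t} Q \<le> (t - r) * Q t"
      using integral_le[OF integrable_const_ivl Q_int', of "Q r"]
            integral_le[OF Q_int' integrable_const_ivl, of "Q t"]
            mono_onD[OF mono] rt by auto
    moreover have "(t - r) * Q r \<le> U t - U r \<and> U t - U r \<le> (t - r) * Q t"
      using subgradient_increment_bounds[OF sub] rt by auto
    ultimately show "\<bar>F t - F r\<bar> \<le> (t - r) * (Q t - Q r) + 0 * (t - r)\<^sup>2"
      unfolding abs_le_iff right_diff_distrib by linarith
  qed
  then have "integral {a..b} Q = U b - U a" by (simp add: F_def)
  then show ?thesis using Q_int by (metis has_integral_integrable_integral)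
qed

lemma integrable_on_mult_mono_on:
  fixes g Q :: "real \<Rightarrow> real"
  assumes g: "continuous_on {a..b} g" and Q: "mono_on {a..b} Q"
  shows "(\<lambda>t. g t * Q t) integrable_on {a..b}"
proof -
  have "Q \<in> borel_measurable (lebesgue_on {a..b})"
    using integrable_mono_on[OF Q] by blast
  moreover have "bounded (Q ` {a..b})"
    unfolding bounded_iff
    by (rule exI[of _ "max \<bar>Q a\<bar> \<bar>Q b\<bar>"]) (use mono_onD[OF Q] in \<open>force simp: abs_le_iff\<close>)
  ultimately have "(\<lambda>t. Q t * g t) absolutely_integrable_on {a..b}"
    using absolutely_integrable_continuous_real[OF g]
    by (intro absolutely_integrable_bounded_measurable_product_real) auto
  then show ?thesis by (simp add: absolutely_integrable_on_def mult.commute)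
qed

lemma integration_by_parts_subgradient_error:
  fixes U Q g g' :: "real \<Rightarrow> real"
  assumes ab: "a \<le> b"
    and sub: "\<And>r t. r \<in> {a..b} \<Longrightarrow> t \<in> {a..b} \<Longrightarrow> (t - r) * Q r \<le> U t - U r"
    and g_deriv: "\<And>t. t \<in> {a..b} \<Longrightarrow> (g has_real_derivative g' t) (at t within {a..b})"
    and g'_cont: "continuous_on {a..b} g'"
    and G: "\<And>s. s \<in> {a..b} \<Longrightarrow> \<bar>g' s\<bar> \<le> G"
    and K: "\<And>s. s \<in> {a..b} \<Longrightarrow> \<bar>Q s\<bar> \<le> K"
  shows "\<bar>g b * U b - g a * U a - integral {a..b} (\<lambda>t. g' t * U t + g t * Q t)\<bar>
           \<le> 2 * G * K * (b - a)\<^sup>2"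
proof -
  have U_lip: "K-lipschitz_on {a..b} U"
    using lipschitz_on_mono[OF subgradient_lipschitz_on[where a=a and b=b, OF sub] order_refl]
      K[of a] K[of b] ab by simp
  have U_cont: "continuous_on {a..b} U" by (rule lipschitz_on_continuous_on[OF U_lip])
  have g_cont: "continuous_on {a..b} g"
    unfolding continuous_on_eq_continuous_within by (metis DERIV_continuous g_deriv)
  have g_lip: "\<bar>g u - g s\<bar> \<le> G * \<bar>u - s\<bar>" if "s \<in> {a..b}" "u \<in> {a..b}" for s u
    using field_differentiable_bound[where S="{a..b}" and f=g and f'=g' and B=G and x=u and y=s]
      g_deriv G that by simp
  have g_ftc: "(g' has_integral (g b - g a)) {a..b}"
    using ab g_deriv by (intro fundamental_theorem_of_calculus)
      (auto simp: has_real_derivative_iff_has_vector_derivative[symmetric])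
  have Q_ftc: "(Q has_integral (U b - U a)) {a..b}"
    by (rule has_integral_subgradient[OF ab sub])
  have mono: "mono_on {a..b} Q" by (rule subgradient_mono_on[OF sub])
  have gQ_int: "(\<lambda>s. g s * Q s) integrable_on {a..b}"
    by (rule integrable_on_mult_mono_on[OF g_cont mono])
  have g'U_int: "(\<lambda>s. g' s * U s) integrable_on {a..b}"
    by (intro integrable_continuous_interval continuous_intros g'_cont U_cont)
  define B where "B = integral {a..b} (\<lambda>s. g' s * (U s - U a))"
  define C where "C = integral {a..b} (\<lambda>s. (g b - g s) * Q s)"
  have "integral {a..b} (\<lambda>t. g' t * U t + g t * Q t)
          = integral {a..b} (\<lambda>s. g' s * U s) + integral {a..b} (\<lambda>s. g s * Q s)"
    by (rule integral_add[OF g'U_int gQ_int])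
  moreover have "B = integral {a..b} (\<lambda>s. g' s * U s) - U a * (g b - g a)"
    using has_integral_diff[OF integrable_integral[OF g'U_int] has_integral_mult_left[OF g_ftc, of "U a"]]
    unfolding B_def by (simp add: right_diff_distrib mult.commute integral_unique)
  moreover have "C = g b * (U b - U a) - integral {a..b} (\<lambda>s. g s * Q s)"
    using has_integral_diff[OF has_integral_mult_right[OF Q_ftc, of "g b"] integrable_integral[OF gQ_int]]
    unfolding C_def by (simp add: left_diff_distrib integral_unique)
  ultimately have "g b * U b - g a * U a - integral {a..b} (\<lambda>t. g' t * U t + g t * Q t) = C - B"
    by (simp add: algebra_simps)
  moreover have "\<bar>B\<bar> \<le> (G * (K * (b - a))) * (b - a)"
    unfolding B_def
  proof (rule abs_integral_le_real)
    show "(\<lambda>s. g' s * (U s - U a)) integrable_on {a..b}"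
      by (intro integrable_continuous_interval continuous_intros g'_cont U_cont)
    fix s assume s: "s \<in> {a..b}"
    have "\<bar>U s - U a\<bar> \<le> K * (b - a)"
      using lipschitz_onD[OF U_lip, of s a] s ab K[of a]
      by (auto simp: dist_real_def intro: order_trans[OF _ mult_left_mono[of "s - a" "b - a" K]])
    then show "\<bar>g' s * (U s - U a)\<bar> \<le> G * (K * (b - a))"
      unfolding abs_mult using G[of s] s by (intro mult_mono) auto
  qed (rule ab)
  moreover have "\<bar>C\<bar> \<le> (G * (b - a) * K) * (b - a)"
    unfolding C_def
  proof (rule abs_integral_le_real)
    show "(\<lambda>s. (g b - g s) * Q s) integrable_on {a..b}"
      by (intro integrable_on_mult_mono_on mono continuous_intros g_cont)
    fix s assume s: "s \<in> {a..b}"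
    have "\<bar>g b - g s\<bar> \<le> G * (b - a)"
      using g_lip[OF s, of b] s ab G[of a]
      by (auto intro: order_trans[OF _ mult_left_mono[of "b - s" "b - a" G]])
    then show "\<bar>(g b - g s) * Q s\<bar> \<le> G * (b - a) * K"
      unfolding abs_mult using K[of s] s by (intro mult_mono) auto
  qed (rule ab)
  ultimately show ?thesis by (simp add: power2_eq_square algebra_simps)
qed

lemma integration_by_parts_subgradient:
  fixes U Q g g' :: "real \<Rightarrow> real"
  assumes ab: "a \<le> b"
    and sub: "\<And>r t. r \<in> {a..b} \<Longrightarrow> t \<in> {a..b} \<Longrightarrow> (t - r) * Q r \<le> U t - U r"
    and g_deriv: "\<And>t. t \<in> {a..b} \<Longrightarrow> (g has_real_derivative g' t) (at t within {a..b})"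
    and g'_cont: "continuous_on {a..b} g'"
  shows "((\<lambda>t. g' t * U t + g t * Q t) has_integral (g b * U b - g a * U a)) {a..b}"
proof -
  define K where "K = max \<bar>Q a\<bar> \<bar>Q b\<bar>"
  have K: "\<bar>Q s\<bar> \<le> K" if "s \<in> {a..b}" for s
    using subgradient_abs_le[OF sub that] by (simp add: K_def)
  obtain G where G: "\<And>s. s \<in> {a..b} \<Longrightarrow> \<bar>g' s\<bar> \<le> G"
    using compact_imp_bounded[OF compact_continuous_image[OF g'_cont compact_Icc]]
    unfolding bounded_iff by (metis imageI real_norm_def)
  have U_cont: "continuous_on {a..b} U"
    by (rule lipschitz_on_continuous_on[OF subgradient_lipschitz_on[OF sub]])
  define h where "h t = g' t * U t + g t * Q t" for t
  have h_int: "h integrable_on {a..b}"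
    unfolding h_def
    by (intro integrable_add integrable_on_mult_mono_on subgradient_mono_on[OF sub]
        integrable_continuous_interval continuous_intros g'_cont U_cont)
       (metis DERIV_continuous continuous_on_eq_continuous_within g_deriv)
  define D where "D t = g t * U t - integral {a..t} h" for t
  have "D b = D a"
  proof (rule eq_if_increments_bounded[where F=D and M="\<lambda>_. 0" and C="2 * G * K", OF ab])
    fix r t assume rt: "a \<le> r" "r \<le> t" "t \<le> b"
    then have sub_ivl: "{r..t} \<subseteq> {a..b}" by auto
    have "integral {a..t} h = integral {a..r} h + integral {r..t} h"
      using Henstock_Kurzweil_Integration.integral_combine[where a=a and c=r and b=t and f=h]
        integrable_subinterval_real[OF h_int, of a t] rt by simp
    moreover have "\<bar>g t * U t - g r * U r - integral {r..t} h\<bar> \<le> 2 * G * K * (t - r)\<^sup>2"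
      unfolding h_def
    proof (rule integration_by_parts_subgradient_error[OF rt(2)])
      show "(g has_real_derivative g' s) (at s within {r..t})" if "s \<in> {r..t}" for s
        using DERIV_subset[OF g_deriv sub_ivl] that sub_ivl by blast
    qed (use sub_ivl sub G K continuous_on_subset[OF g'_cont sub_ivl] in auto)
    ultimately show "\<bar>D t - D r\<bar> \<le> (t - r) * (0 - 0) + 2 * G * K * (t - r)\<^sup>2"
      by (simp add: D_def algebra_simps)
  qed
  then have "integral {a..b} h = g b * U b - g a * U a" by (simp add: D_def)
  then show ?thesis using h_int unfolding h_def[abs_def] by (metis has_integral_integrable_integral)
qed

lemma envelope_integral_identity:
  fixes U Qp Qm f f' :: "real \<Rightarrow> real"
  assumes ab: "a \<le> b"
    and sub: "\<And>r t. r \<in> {a..b} \<Longrightarrow> t \<in> {a..b} \<Longrightarrow> (t - r) * (Qp r + Qm r) \<le> U t - U r"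
    and U_eq: "\<And>t. t \<in> {a..b} \<Longrightarrow> U t = t * Qp t - (1 - t) * Qm t"
    and f_deriv: "\<And>t. t \<in> {a..b} \<Longrightarrow> (f has_real_derivative f' t) (at t within {a..b})"
    and f'_cont: "continuous_on {a..b} f'"
  shows "integral {a..b} (\<lambda>t. f t * (t * Qp t + (1 - t) * Qm t)) =
           - (LINT t:{a..b}|lborel. (3 * (1 - 2 * t) * f t + 2 * t * (1 - t) * f' t) * U t)
           + 2 * b * (1 - b) * f b * U b - 2 * a * (1 - a) * f a * U a"
proof -
  define g where "g t = 2 * t * (1 - t) * f t" for t
  define g' where "g' t = 2 * (1 - 2 * t) * f t + 2 * t * (1 - t) * f' t" for t
  define \<psi> where "\<psi> t = 3 * (1 - 2 * t) * f t + 2 * t * (1 - t) * f' t" for t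
  have g_deriv: "(g has_real_derivative g' t) (at t within {a..b})" if "t \<in> {a..b}" for t
    unfolding g_def[abs_def] g'_def
    by (rule derivative_eq_intros f_deriv[OF that] refl | simp add: algebra_simps)+
  have f_cont: "continuous_on {a..b} f"
    unfolding continuous_on_eq_continuous_within by (metis DERIV_continuous f_deriv)
  have U_cont: "continuous_on {a..b} U"
    by (rule lipschitz_on_continuous_on[OF subgradient_lipschitz_on[OF sub]])
  have ibp: "((\<lambda>t. g' t * U t + g t * (Qp t + Qm t)) has_integral (g b * U b - g a * U a)) {a..b}"
    by (rule integration_by_parts_subgradient[OF ab sub g_deriv])
       (auto simp: g'_def intro!: continuous_intros f_cont f'_cont)
  have \<psi>U_cont: "continuous_on {a..b} (\<lambda>t. \<psi> t * U t)"
    unfolding \<psi>_def by (intro continuous_intros f_cont f'_cont U_cont)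
  have \<psi>U_integral: "(LINT t:{a..b}|lborel. \<psi> t * U t) = integral {a..b} (\<lambda>t. \<psi> t * U t)"
    using borel_integrable_compact[OF compact_Icc \<psi>U_cont]
    by (intro set_borel_integral_eq_integral(2)) (simp add: set_integrable_def)
  have "integral {a..b} (\<lambda>t. f t * (t * Qp t + (1 - t) * Qm t))
          = integral {a..b} (\<lambda>t. (g' t * U t + g t * (Qp t + Qm t)) - \<psi> t * U t)"
    \<comment> \<open>pointwise, since t Qp + (1 - t) Qm = (2t - 1) U + 2t(1 - t) (Qp + Qm) and \<psi> = g' + (1 - 2t) f\<close>
    by (rule integral_cong) (simp add: U_eq g_def g'_def \<psi>_def algebra_simps)
  also have "\<dots> = (g b * U b - g a * U a) - integral {a..b} (\<lambda>t. \<psi> t * U t)"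
    using integral_diff[OF has_integral_integrable[OF ibp] integrable_continuous_interval[OF \<psi>U_cont]]
      integral_unique[OF ibp] by simp
  finally show ?thesis using \<psi>U_integral by (simp add: g_def \<psi>_def)
qed

lemma (in product_sigma_finite)
  fixes f :: "_ \<Rightarrow> _::{banach, second_countable_topology}"
  assumes J: "finite J" "i \<notin> J" and f: "integrable (Pi\<^sub>M (insert i J) M) f"
  shows integrable_product_marginal: "integrable (M i) (\<lambda>t. \<integral>y. f (y(i := t)) \<partial>Pi\<^sub>M J M)"
    and integral_product_marginal:
      "integral\<^sup>L (Pi\<^sub>M (insert i J) M) f = (\<integral>t. (\<integral>y. f (y(i := t)) \<partial>Pi\<^sub>M J M) \<partial>M i)"
proof -
  interpret J: finite_product_sigma_finite M J by standard (rule J(1))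
  interpret I: finite_product_sigma_finite M "{i}" by standard simp
  interpret P: pair_sigma_finite "Pi\<^sub>M {i} M" "Pi\<^sub>M J M" ..
  define G where "G t = (\<integral>y. f (y(i := t)) \<partial>Pi\<^sub>M J M)" for t
  have f_meas: "f \<in> borel_measurable (Pi\<^sub>M (insert i J) M)" using f by auto
  have "(\<lambda>p. (snd p)(i := fst p)) \<in> measurable (M i \<Otimes>\<^sub>M Pi\<^sub>M J M) (Pi\<^sub>M (insert i J) M)"
    by (rule measurable_fun_upd[where J=J]) auto
  then have G_meas: "G \<in> borel_measurable (M i)"
    unfolding G_def using f_meas
    by (intro J.borel_measurable_lebesgue_integral) (simp add: case_prod_beta')
  have merge: "merge {i} J (z, y) = y(i := z i)" if "y \<in> space (Pi\<^sub>M J M)" for z y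
    using that J(2) by (auto simp: merge_def space_PiM PiE_def extensional_def fun_eq_iff)
  have inner: "(\<integral>y. f (merge {i} J (z, y)) \<partial>Pi\<^sub>M J M) = G (z i)" for z
    unfolding G_def by (rule Bochner_Integration.integral_cong) (simp_all add: merge)
  have "integrable (Pi\<^sub>M {i} M \<Otimes>\<^sub>M Pi\<^sub>M J M) (\<lambda>p. f (merge {i} J p))"
    using J f distr_merge[of "{i}" J] by (intro integrable_distr[OF measurable_merge]) simp
  from P.integrable_fst'[OF this] have "integrable (Pi\<^sub>M {i} M) (\<lambda>z. G (z i))"
    by (simp add: inner)
  then show "integrable (M i) G"
    using integrable_distr_eq[OF measurable_component_singleton[of i "{i}" M] G_meas] distr_singleton by simp
  have "integral\<^sup>L (Pi\<^sub>M (insert i J) M) f = (\<integral>z. G (z i) \<partial>Pi\<^sub>M {i} M)"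
    using product_integral_fold[of "{i}" J f] J f by (simp add: inner)
  also have "\<dots> = integral\<^sup>L (M i) G"
    by (rule product_integral_singleton[OF G_meas])
  finally show "integral\<^sup>L (Pi\<^sub>M (insert i J) M) f = integral\<^sup>L (M i) G" .
qed

definition prob_density :: "(real \<Rightarrow> real) \<Rightarrow> bool" where
  "prob_density g \<longleftrightarrow>
     g \<in> borel_measurable lborel \<and> (\<forall>s. 0 \<le> g s) \<and> (\<integral>\<^sup>+ s. ennreal (g s) \<partial>lborel) = 1"

lemma integrable_prod_density:
  assumes "prob_density g" and "finite J"
  shows "integrable (Pi\<^sub>M J (\<lambda>_. lborel)) (\<lambda>y. \<Prod>j\<in>J. g (y j))"
proof -
  interpret product_sigma_finite "\<lambda>_. lborel :: real measure" by standard
  have "integrable lborel g"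
    using assms(1) by (auto simp: prob_density_def intro!: integrableI_nonneg)
  then show ?thesis
    using product_integrable_prod[of J "\<lambda>_. g"] assms(2) by simp
qed

lemma prod_lessThan_fun_upd:
  fixes g :: "'a \<Rightarrow> 'b::comm_monoid_mult" and i n :: nat
  assumes "i < n"
  shows "(\<Prod>j<n. g ((y(i := t)) j)) = g t * (\<Prod>j\<in>{..<n} - {i}. g (y j))"
proof -
  have "(\<Prod>j<n. g ((y(i := t)) j)) = g t * (\<Prod>j\<in>{..<n} - {i}. g ((y(i := t)) j))"
    using assms prod.remove[of "{..<n}" i "\<lambda>j. g ((y(i := t)) j)"] by simp
  also have "(\<Prod>j\<in>{..<n} - {i}. g ((y(i := t)) j)) = (\<Prod>j\<in>{..<n} - {i}. g (y j))"
    by (intro prod.cong) auto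
  finally show ?thesis .
qed

lemma mechanism_weighted_bounds:
  assumes mech: "mechanism a b n x" and s: "s \<in> space (Pi\<^sub>M {..<n} (\<lambda>_. lborel :: real measure))"
    and w: "0 \<le> w" and supp: "w \<noteq> 0 \<Longrightarrow> \<forall>j<n. s j \<in> {a..b}"
  shows "0 \<le> x s * w \<and> x s * w \<le> w"
proof (cases "w = 0")
  case False
  then have "s \<in> PiE {..<n} (\<lambda>_. {a..b})" using s supp by (auto simp: space_PiM PiE_iff)
  then have "0 \<le> x s" "x s \<le> 1" using mech by (auto simp: mechanism_def)
  then show ?thesis using w by (simp add: mult_left_le_one_le)
qed simp

lemma integrable_cond_alloc_integrand:
  assumes g: "prob_density g" and supp: "\<And>s. g s \<noteq> 0 \<Longrightarrow> s \<in> {a..b}"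
    and mech: "mechanism a b n x" and i: "i < n" and t: "t \<in> {a..b}"
  shows "integrable (Pi\<^sub>M ({..<n} - {i}) (\<lambda>_. lborel))
           (\<lambda>y. x (y(i := t)) * (\<Prod>j\<in>{..<n} - {i}. g (y j)))"
proof (rule Bochner_Integration.integrable_bound[OF integrable_prod_density[OF g]])
  have "(\<lambda>y. y(i := t)) \<in> measurable (Pi\<^sub>M ({..<n} - {i}) (\<lambda>_. lborel)) (Pi\<^sub>M {..<n} (\<lambda>_. lborel))"
    by (rule measurable_fun_upd[where J="{..<n} - {i}"]) (use i in auto)
  then show "(\<lambda>y. x (y(i := t)) * (\<Prod>j\<in>{..<n} - {i}. g (y j)))
               \<in> borel_measurable (Pi\<^sub>M ({..<n} - {i}) (\<lambda>_. lborel))"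
    using mech g by (auto simp: mechanism_def prob_density_def)
  show "AE y in Pi\<^sub>M ({..<n} - {i}) (\<lambda>_. lborel).
          norm (x (y(i := t)) * (\<Prod>j\<in>{..<n} - {i}. g (y j))) \<le> norm (\<Prod>j\<in>{..<n} - {i}. g (y j))"
  proof (rule AE_I2)
    fix y assume y: "y \<in> space (Pi\<^sub>M ({..<n} - {i}) (\<lambda>_. lborel :: real measure))"
    have w: "0 \<le> (\<Prod>j\<in>{..<n} - {i}. g (y j))"
      using g by (auto simp: prob_density_def intro: prod_nonneg)
    have "y(i := t) \<in> space (Pi\<^sub>M {..<n} (\<lambda>_. lborel :: real measure))"
      using y i by (auto simp: space_PiM PiE_iff extensional_def)
    moreover have "\<forall>j<n. (y(i := t)) j \<in> {a..b}" if "(\<Prod>j\<in>{..<n} - {i}. g (y j)) \<noteq> 0"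
      using that supp t by auto
    ultimately show "norm (x (y(i := t)) * (\<Prod>j\<in>{..<n} - {i}. g (y j))) \<le> norm (\<Prod>j\<in>{..<n} - {i}. g (y j))"
      using mechanism_weighted_bounds[OF mech _ w] w by auto
  qed
qed simp

lemma ex_ante_alloc_eq_integral:
  assumes fp: "prob_density fp" and fm: "prob_density fm"
    and fp_supp: "\<And>s. fp s \<noteq> 0 \<Longrightarrow> s \<in> {a..b}" and fm_supp: "\<And>s. fm s \<noteq> 0 \<Longrightarrow> s \<in> {a..b}"
    and mech: "mechanism a b n x" and i: "i < n"
  shows "ex_ante_alloc fp fm n x =
           integral {a..b} (\<lambda>t. (fp t * cond_alloc fp n x i t + fm t * cond_alloc fm n x i t) / 2)"
proof -
  interpret product_sigma_finite "\<lambda>_. lborel :: real measure" by standard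
  define J where "J = {..<n} - {i}"
  have J: "finite J" "i \<notin> J" "insert i J = {..<n}" using i by (auto simp: J_def)
  define D where "D s = (1/2) * (\<Prod>j<n. fp (s j)) + (1/2) * (\<Prod>j<n. fm (s j))" for s :: "nat \<Rightarrow> real"
  define F where "F s = x s * D s" for s
  define \<phi> where "\<phi> t = (fp t * cond_alloc fp n x i t + fm t * cond_alloc fm n x i t) / 2" for t
  have D_int: "integrable (Pi\<^sub>M {..<n} (\<lambda>_. lborel)) D"
    unfolding D_def using integrable_prod_density[OF fp, of "{..<n}"] integrable_prod_density[OF fm, of "{..<n}"]
    by simp
  have F_int: "integrable (Pi\<^sub>M (insert i J) (\<lambda>_. lborel)) F"
    unfolding J(3)
  proof (rule Bochner_Integration.integrable_bound[OF D_int])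
    show "F \<in> borel_measurable (Pi\<^sub>M {..<n} (\<lambda>_. lborel))"
      using mech borel_measurable_integrable[OF D_int]
      unfolding F_def mechanism_def by (intro borel_measurable_times) auto
    show "AE s in Pi\<^sub>M {..<n} (\<lambda>_. lborel). norm (F s) \<le> norm (D s)"
    proof (rule AE_I2)
      fix s assume s: "s \<in> space (Pi\<^sub>M {..<n} (\<lambda>_. lborel :: real measure))"
      have D0: "0 \<le> D s"
        using fp fm unfolding D_def prob_density_def by (simp add: prod_nonneg)
      moreover have "\<forall>j<n. s j \<in> {a..b}" if "D s \<noteq> 0"
      proof -
        have "(\<Prod>j<n. fp (s j)) \<noteq> 0 \<or> (\<Prod>j<n. fm (s j)) \<noteq> 0"
          using that unfolding D_def by (metis add.right_neutral mult_zero_right)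
        then show ?thesis using fp_supp fm_supp by fastforce
      qed
      ultimately show "norm (F s) \<le> norm (D s)"
        using mechanism_weighted_bounds[OF mech s D0] by (auto simp: F_def)
    qed
  qed
  have marginal: "(\<integral>y. F (y(i := t)) \<partial>Pi\<^sub>M J (\<lambda>_. lborel)) = indicator {a..b} t * \<phi> t" for t
  proof (cases "t \<in> {a..b}")
    case True
    have "F (y(i := t)) = fp t / 2 * (x (y(i := t)) * (\<Prod>j\<in>J. fp (y j)))
                         + fm t / 2 * (x (y(i := t)) * (\<Prod>j\<in>J. fm (y j)))" for y
      unfolding F_def D_def prod_lessThan_fun_upd[OF i] by (simp add: J_def algebra_simps)
    then show ?thesis
      using True integrable_cond_alloc_integrand[OF fp fp_supp mech i True]
        integrable_cond_alloc_integrand[OF fm fm_supp mech i True]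
      by (simp add: \<phi>_def cond_alloc_def J_def add_divide_distrib)
  next
    case False
    then have "fp t = 0" "fm t = 0" using fp_supp fm_supp by auto
    then show ?thesis
      using False unfolding F_def D_def prod_lessThan_fun_upd[OF i] by simp
  qed
  have "ex_ante_alloc fp fm n x = integral\<^sup>L (Pi\<^sub>M (insert i J) (\<lambda>_. lborel)) F"
    unfolding ex_ante_alloc_def J(3) F_def D_def ..
  also have "\<dots> = (\<integral>t. indicator {a..b} t * \<phi> t \<partial>lborel)"
    unfolding integral_product_marginal[OF J(1,2) F_int] marginal ..
  also have "\<dots> = integral {a..b} \<phi>"
  proof -
    have "set_integrable lborel {a..b} \<phi>"
      using integrable_product_marginal[OF J(1,2) F_int] by (simp add: marginal set_integrable_def)
    from set_borel_integral_eq_integral(2)[OF this] show ?thesis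
      by (simp add: set_lebesgue_integral_def)
  qed
  finally show ?thesis unfolding \<phi>_def .
qed

lemma interim_util_normalized:
  assumes "posterior fp fm t = t"
  shows "interim_util fp fm n x i t = t * cond_alloc fp n x i t - (1 - t) * cond_alloc fm n x i t"
  using assms by (simp add: interim_util_def report_util_def)

lemma interim_util_subgradient:
  assumes normalized: "\<forall>s\<in>{a..b}. posterior fp fm s = s"
    and IC: "\<forall>t\<in>{a..b}. \<forall>r\<in>{a..b}. interim_util fp fm n x i t \<ge> report_util fp fm n x i t r"
    and r: "r \<in> {a..b}" and t: "t \<in> {a..b}"
  shows "(t - r) * (cond_alloc fp n x i r + cond_alloc fm n x i r)
           \<le> interim_util fp fm n x i t - interim_util fp fm n x i r"
proof -
  have "report_util fp fm n x i t r = interim_util fp fm n x i r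
          + (t - r) * (cond_alloc fp n x i r + cond_alloc fm n x i r)"
    using normalized r t by (simp add: interim_util_def report_util_def algebra_simps)
  then show ?thesis using IC r t by force
qed

lemma densities_of_normalized_posterior:
  assumes f: "f t = (fp t + fm t) / 2" and pos: "0 < f t" and post: "posterior fp fm t = t"
  shows "fp t = 2 * t * f t" and "fm t = 2 * (1 - t) * f t"
proof -
  have "fp t = t * (fp t + fm t)"
    using post f pos by (simp add: posterior_def field_simps)
  then show "fp t = 2 * t * f t" and "fm t = 2 * (1 - t) * f t"
    using f by (simp_all add: algebra_simps)
qed

lemma ex_ante_alloc_normalized:
  assumes fp: "prob_density fp" and fm: "prob_density fm"
    and f_def: "\<forall>s. f s = (fp s + fm s) / 2" and f_supp: "\<forall>s. s \<notin> {a..b} \<longrightarrow> f s = 0"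
    and f_pos: "\<forall>s\<in>{a..b}. f s > 0" and normalized: "\<forall>s\<in>{a..b}. posterior fp fm s = s"
    and mech: "mechanism a b n x" and i: "i < n"
  shows "ex_ante_alloc fp fm n x =
           integral {a..b} (\<lambda>t. f t * (t * cond_alloc fp n x i t + (1 - t) * cond_alloc fm n x i t))"
proof -
  have supp: "fp s = 0 \<and> fm s = 0" if "s \<notin> {a..b}" for s
  proof -
    have "fp s + fm s = 0" using f_supp f_def that by simp
    then show ?thesis using add_nonneg_eq_0_iff fp fm by (metis prob_density_def)
  qed
  have "ex_ante_alloc fp fm n x =
          integral {a..b} (\<lambda>t. (fp t * cond_alloc fp n x i t + fm t * cond_alloc fm n x i t) / 2)"
    using supp by (intro ex_ante_alloc_eq_integral[OF fp fm _ _ mech i]) blast+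
  also have "\<dots> = integral {a..b} (\<lambda>t. f t * (t * cond_alloc fp n x i t + (1 - t) * cond_alloc fm n x i t))"
  proof (rule integral_cong)
    fix t assume t: "t \<in> {a..b}"
    note dens = densities_of_normalized_posterior[where f=f and fp=fp and fm=fm and t=t,
                  OF f_def[rule_format] f_pos[rule_format, OF t] normalized[rule_format, OF t]]
    show "(fp t * cond_alloc fp n x i t + fm t * cond_alloc fm n x i t) / 2
            = f t * (t * cond_alloc fp n x i t + (1 - t) * cond_alloc fm n x i t)"
      unfolding dens by (simp add: field_simps)
  qed
  finally show ?thesis .
qed

theorem lemmaA4:
  fixes fp fm f f' :: "real \<Rightarrow> real" and a b :: real and n i :: nat
    and x :: "(nat \<Rightarrow> real) \<Rightarrow> real"
  assumes ab: "0 \<le> a" "a < b" "b \<le> 1"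
    and fp_meas: "fp \<in> borel_measurable lborel" and fm_meas: "fm \<in> borel_measurable lborel"
    and fp_nonneg: "\<forall>s. 0 \<le> fp s" and fm_nonneg: "\<forall>s. 0 \<le> fm s"
    and fp_prob: "(\<integral>\<^sup>+ s. ennreal (fp s) \<partial>lborel) = 1"
    and fm_prob: "(\<integral>\<^sup>+ s. ennreal (fm s) \<partial>lborel) = 1"
    and mutual_ac: "AE s in lborel. (fp s = 0 \<longleftrightarrow> fm s = 0)"
    and f_def: "\<forall>s. f s = (fp s + fm s) / 2"
    and f_supp: "\<forall>s. s \<notin> {a..b} \<longrightarrow> f s = 0"
    and f_pos: "\<forall>s\<in>{a..b}. f s > 0"
    and normalized: "\<forall>s\<in>{a..b}. posterior fp fm s = s"
    and f_deriv: "\<forall>s\<in>{a..b}. (f has_real_derivative f' s) (at s within {a..b})"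
    and f'_cont: "continuous_on {a..b} f'"
    and f'_f_bdd: "\<exists>B. \<forall>s\<in>{a..b}. \<bar>f' s / f s\<bar> \<le> B"
    and n: "n \<ge> 2" and i: "i < n"
    and mech: "mechanism a b n x"
    and P: "\<forall>t\<in>{a..b}. interim_util fp fm n x i t \<ge> 0"
    and IC: "\<forall>t\<in>{a..b}. \<forall>r\<in>{a..b}. interim_util fp fm n x i t \<ge> report_util fp fm n x i t r"
  shows "ex_ante_alloc fp fm n x =
           - (LINT t:{a..b}|lborel. (3 * (1 - 2 * t) * f t + 2 * t * (1 - t) * f' t)
                                    * interim_util fp fm n x i t)
           + 2 * b * (1 - b) * f b * interim_util fp fm n x i b
           - 2 * a * (1 - a) * f a * interim_util fp fm n x i a"
proof -
  have densities: "prob_density fp" "prob_density fm"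
    using fp_meas fm_meas fp_nonneg fm_nonneg fp_prob fm_prob by (simp_all add: prob_density_def)
  have sub: "(t - r) * (cond_alloc fp n x i r + cond_alloc fm n x i r)
               \<le> interim_util fp fm n x i t - interim_util fp fm n x i r"
    if "r \<in> {a..b}" "t \<in> {a..b}" for r t
    using interim_util_subgradient[OF normalized IC that] .
  have U_eq: "interim_util fp fm n x i t = t * cond_alloc fp n x i t - (1 - t) * cond_alloc fm n x i t"
    if "t \<in> {a..b}" for t
    using interim_util_normalized[OF normalized[rule_format, OF that]] .
  show ?thesis
    unfolding ex_ante_alloc_normalized[OF densities f_def f_supp f_pos normalized mech i]
    by (rule envelope_integral_identity[OF _ sub U_eq f_deriv[rule_format] f'_cont]) (use ab in auto)
qed

end
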